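(* For $\theta \in \mathrm{Aut}(\mathbb{F}_{p^m})$, $\eta_1 \in \mathbb{F}_{p^m}^*$, and $\eta_i \in 1 + u^{i-1}\mathbb{F}_{p^m}$ for $2 \le i \le k-1$, define \[ \Theta_{\theta,\eta_1,\dots,\eta_{k-1}} : R_k \to R_k,\qquad \sum_{i=0}^{k-1} a_i u^i \longmapsto \sum_{i=0}^{k-1} \theta(a_i)\Big(\prod_{j=1}^{k-1}\eta_j\Big)^{i} u^i \quad (a_i\in\mathbb{F}_{p^m}). \] Then each $\Theta_{\theta,\eta_1,\dots,\eta_{k-1}}$ is a ring automorphism of $R_k$, and \[ \mathrm{Aut}(R_k)=\{\Theta_{\theta,\eta_1,\dots,\eta_{k-1}} : \theta\in\mathrm{Aut}(\mathbb{F}_{p^m}),\ \eta_1\in\mathbb{F}_{p^m}^*,\ \eta_i\in 1+u^{i-1}\mathbb{F}_{p^m}\ (2\le i\le k-1)\}. \]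
   Context: Let $p$ be a prime, $m,k\ge 1$, $\mathbb{F}_{p^m}$ the finite field with $p^m$ elements, and $R_k=\mathbb{F}_{p^m}[u]/\langle u^k\rangle=\mathbb{F}_{p^m}+u\mathbb{F}_{p^m}+\dots+u^{k-1}\mathbb{F}_{p^m}$ with $u^k=0$. $\mathbb{F}_{p^m}^*$ denotes the nonzero elements of $\mathbb{F}_{p^m}$. *)

theory Defs
  imports "HOL-Algebra.Algebra" "HOL-Computational_Algebra.Primes"
begin

definition Fring :: "('a::field) ring" where
  "Fring = \<lparr>carrier = UNIV, monoid.mult = (*), one = 1, ring.zero = 0, ring.add = (+)\<rparr>"

text \<open>R_k = F[u]/<u^k>: an element sum_{i<k} a_i u^i is represented by its coefficient
  function a :: nat => 'a, with a i = 0 for i >= k.  Multiplication is the truncated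
  convolution (u^k = 0).\<close>
definition Rk :: "nat \<Rightarrow> (nat \<Rightarrow> 'a::field) ring" where
  "Rk k = \<lparr>carrier = {a. \<forall>i\<ge>k. a i = 0},
           monoid.mult = (\<lambda>a b i. if i < k then (\<Sum>j\<le>i. a j * b (i - j)) else 0),
           one = (\<lambda>i. if i = 0 \<and> 0 < k then 1 else 0),
           ring.zero = (\<lambda>i. 0),
           ring.add = (\<lambda>a b i. a i + b i)\<rparr>"

definition Rk_const :: "nat \<Rightarrow> 'a::field \<Rightarrow> (nat \<Rightarrow> 'a)" where
  "Rk_const k c = (\<lambda>i. if i = 0 \<and> 0 < k then c else 0)"

definition Rk_u :: "nat \<Rightarrow> (nat \<Rightarrow> 'a::field)" where
  "Rk_u k = (\<lambda>i. if i = 1 \<and> 1 < k then 1 else 0)"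

definition admissible :: "nat \<Rightarrow> ('a::field \<Rightarrow> 'a) \<Rightarrow> (nat \<Rightarrow> nat \<Rightarrow> 'a) \<Rightarrow> bool" where
  "admissible k \<theta> \<eta> \<longleftrightarrow>
     \<theta> \<in> ring_iso Fring Fring \<and>
     (\<exists>e. e \<noteq> 0 \<and> \<eta> 1 = Rk_const k e) \<and>
     (\<forall>i. 2 \<le> i \<and> i \<le> k - 1 \<longrightarrow>
        (\<exists>c. \<eta> i = \<one>\<^bsub>Rk k\<^esub> \<oplus>\<^bsub>Rk k\<^esub>
                    (Rk_const k c \<otimes>\<^bsub>Rk k\<^esub> (Rk_u k [^]\<^bsub>Rk k\<^esub> (i - 1)))))"

definition Theta :: "nat \<Rightarrow> ('a::field \<Rightarrow> 'a) \<Rightarrow> (nat \<Rightarrow> nat \<Rightarrow> 'a) \<Rightarrow> (nat \<Rightarrow> 'a) \<Rightarrow> (nat \<Rightarrow> 'a)" where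
  "Theta k \<theta> \<eta> a =
     (let P = finprod (Rk k) \<eta> {1..k-1} in
      finsum (Rk k) (\<lambda>i. Rk_const k (\<theta> (a i)) \<otimes>\<^bsub>Rk k\<^esub> (P [^]\<^bsub>Rk k\<^esub> i)
                        \<otimes>\<^bsub>Rk k\<^esub> (Rk_u k [^]\<^bsub>Rk k\<^esub> i)) {..<k})"

end

theory Submission
  imports Defs "HOL-Computational_Algebra.Formal_Power_Series"
begin

(* R_k is the ring of power series over F truncated at X^k. A ring endomorphism that acts on the
   constants by a field automorphism theta and sends u to V is the twisted substitution
   x |-> (theta o x)(V), and Theta is the substitution with V = (prod_j eta_j) X. Composition
   with V is multiplicative, and when V has subdegree one it preserves the lowest nonzero
   coefficient, so the substitution is injective and hence bijective on the finite ring.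
   Conversely, an automorphism sigma maps constants to constants, because in characteristic p
   the p^N-th powers of R_k with p^N >= k are exactly the constants. sigma(u) is nilpotent and
   has a nonzero linear term, since u lies in the image of sigma; so sigma(u) = W X with W a
   unit, and every unit agrees below degree k - 1 with a product
   e (1 + c_2 X) (1 + c_3 X^2) ... of admissible factors. *)

unbundle fps_syntax

definition Rk_of_fps :: "nat \<Rightarrow> 'a::field fps \<Rightarrow> nat \<Rightarrow> 'a" where
  "Rk_of_fps k f = (\<lambda>i. if i < k then f $ i else 0)"

lemma carrier_Rk: "carrier (Rk k) = {a. \<forall>i\<ge>k. a i = 0}"
  by (simp add: Rk_def)

lemma Rk_of_fps_carrier [simp]: "Rk_of_fps k f \<in> carrier (Rk k)"
  by (simp add: carrier_Rk Rk_of_fps_def)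

lemma Rk_of_fps_Abs_fps: "x \<in> carrier (Rk k) \<Longrightarrow> Rk_of_fps k (Abs_fps x) = x"
  by (auto simp: carrier_Rk Rk_of_fps_def fun_eq_iff)

lemma Rk_of_fps_eq_iff: "Rk_of_fps k f = Rk_of_fps k g \<longleftrightarrow> (\<forall>i<k. f $ i = g $ i)"
  by (auto simp: Rk_of_fps_def fun_eq_iff)

lemma Rk_of_fps_mult: "Rk_of_fps k f \<otimes>\<^bsub>Rk k\<^esub> Rk_of_fps k g = Rk_of_fps k (f * g)"
  by (auto simp: Rk_def Rk_of_fps_def fun_eq_iff fps_mult_nth atLeast0AtMost intro!: sum.cong)

lemma Rk_of_fps_add: "Rk_of_fps k f \<oplus>\<^bsub>Rk k\<^esub> Rk_of_fps k g = Rk_of_fps k (f + g)"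
  by (auto simp: Rk_def Rk_of_fps_def fun_eq_iff)

lemma Rk_one_eq: "\<one>\<^bsub>Rk k\<^esub> = Rk_of_fps k 1"
  by (auto simp: Rk_def Rk_of_fps_def fun_eq_iff)

lemma Rk_zero_eq: "\<zero>\<^bsub>Rk k\<^esub> = Rk_of_fps k 0"
  by (auto simp: Rk_def Rk_of_fps_def fun_eq_iff)

lemma Rk_const_eq: "Rk_const k c = Rk_of_fps k (fps_const c)"
  by (auto simp: Rk_const_def Rk_of_fps_def fun_eq_iff)

lemma Rk_u_eq: "Rk_u k = Rk_of_fps k fps_X"
  by (auto simp: Rk_u_def Rk_of_fps_def fun_eq_iff)

lemma Rk_const_carrier [simp]: "Rk_const k c \<in> carrier (Rk k)"
  by (simp add: Rk_const_eq)

lemma Rk_u_carrier [simp]: "Rk_u k \<in> carrier (Rk k)"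
  by (simp add: Rk_u_eq)

lemma ex_Rk_of_fps: "x \<in> carrier (Rk k) \<Longrightarrow> \<exists>f. x = Rk_of_fps k f"
  using Rk_of_fps_Abs_fps by metis

lemma cring_Rk: "cring (Rk k :: (nat \<Rightarrow> 'a::field) ring)"
proof (rule cringI)
  show "abelian_group (Rk k :: (nat \<Rightarrow> 'a) ring)"
  proof (rule abelian_groupI)
    fix x :: "nat \<Rightarrow> 'a" assume "x \<in> carrier (Rk k)"
    then show "\<exists>y\<in>carrier (Rk k). y \<oplus>\<^bsub>Rk k\<^esub> x = \<zero>\<^bsub>Rk k\<^esub>"
      by (intro bexI[of _ "\<lambda>i. - x i"]) (auto simp: Rk_def)
  qed (auto simp: Rk_def add.assoc add.commute)
next
  show "comm_monoid (Rk k :: (nat \<Rightarrow> 'a) ring)"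
  proof (rule comm_monoidI)
    fix x y z :: "nat \<Rightarrow> 'a"
    assume "x \<in> carrier (Rk k)" "y \<in> carrier (Rk k)" "z \<in> carrier (Rk k)"
    then obtain f g h where "x = Rk_of_fps k f" "y = Rk_of_fps k g" "z = Rk_of_fps k h"
      using ex_Rk_of_fps by metis
    then show "x \<otimes>\<^bsub>Rk k\<^esub> y \<in> carrier (Rk k)"
      and "x \<otimes>\<^bsub>Rk k\<^esub> y \<otimes>\<^bsub>Rk k\<^esub> z = x \<otimes>\<^bsub>Rk k\<^esub> (y \<otimes>\<^bsub>Rk k\<^esub> z)"
      and "\<one>\<^bsub>Rk k\<^esub> \<otimes>\<^bsub>Rk k\<^esub> x = x"
      and "x \<otimes>\<^bsub>Rk k\<^esub> y = y \<otimes>\<^bsub>Rk k\<^esub> x"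
      by (simp_all add: Rk_of_fps_mult Rk_one_eq mult_ac)
  qed (simp add: Rk_one_eq)
next
  fix x y z :: "nat \<Rightarrow> 'a"
  assume "x \<in> carrier (Rk k)" "y \<in> carrier (Rk k)" "z \<in> carrier (Rk k)"
  then obtain f g h where "x = Rk_of_fps k f" "y = Rk_of_fps k g" "z = Rk_of_fps k h"
    using ex_Rk_of_fps by metis
  then show "(x \<oplus>\<^bsub>Rk k\<^esub> y) \<otimes>\<^bsub>Rk k\<^esub> z = x \<otimes>\<^bsub>Rk k\<^esub> z \<oplus>\<^bsub>Rk k\<^esub> y \<otimes>\<^bsub>Rk k\<^esub> z"
    by (simp add: Rk_of_fps_mult Rk_of_fps_add distrib_right)
qed

interpretation Rk: cring "Rk k :: (nat \<Rightarrow> 'a::field) ring" for k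
  by (rule cring_Rk)

lemma ring_hom_cring_Rk:
  "\<sigma> \<in> ring_hom (Rk k) (Rk k) \<Longrightarrow> ring_hom_cring (Rk k) (Rk k :: (nat \<Rightarrow> 'a::field) ring) \<sigma>"
  by (intro ring_hom_cring.intro ring_hom_cring_axioms.intro cring_Rk)

lemma Rk_of_fps_pow: "Rk_of_fps k f [^]\<^bsub>Rk k\<^esub> (n::nat) = Rk_of_fps k (f ^ n)"
  by (induction n) (simp_all add: Rk_one_eq Rk_of_fps_mult mult.commute)

lemma Rk_of_fps_finsum: "finsum (Rk k) (\<lambda>i. Rk_of_fps k (f i)) A = Rk_of_fps k (\<Sum>i\<in>A. f i)"
  by (induction A rule: infinite_finite_induct) (simp_all add: Rk_zero_eq Rk_of_fps_add)

lemma Rk_of_fps_finprod: "finprod (Rk k) (\<lambda>i. Rk_of_fps k (f i)) A = Rk_of_fps k (\<Prod>i\<in>A. f i)"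
  by (induction A rule: infinite_finite_induct) (simp_all add: Rk_one_eq Rk_of_fps_mult)

lemma finite_carrier_Rk: "finite (carrier (Rk k :: (nat \<Rightarrow> 'a::{finite,field}) ring))"
  using finite_set_of_finite_funs[of "{..<k}" "UNIV :: 'a set" 0]
  by (simp add: carrier_Rk not_less)

definition Rk_subst :: "nat \<Rightarrow> ('a::field \<Rightarrow> 'a) \<Rightarrow> 'a fps \<Rightarrow> (nat \<Rightarrow> 'a) \<Rightarrow> nat \<Rightarrow> 'a" where
  "Rk_subst k \<theta> V x = Rk_of_fps k (Abs_fps (\<theta> \<circ> x) oo V)"

lemma Rk_of_fps_compose_cong:
  "Rk_of_fps k F = Rk_of_fps k G \<Longrightarrow> Rk_of_fps k (F oo V) = Rk_of_fps k (G oo V)"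
  by (auto simp: Rk_of_fps_eq_iff fps_compose_nth intro!: sum.cong)

lemma finsum_Rk_powers_eq_Rk_subst:
  assumes V0: "V $ 0 = 0"
  shows "finsum (Rk k) (\<lambda>i. Rk_const k (\<theta> (x i)) \<otimes>\<^bsub>Rk k\<^esub> Rk_of_fps k V [^]\<^bsub>Rk k\<^esub> i) {..<k}
           = Rk_subst k \<theta> V x"
proof -
  have "finsum (Rk k) (\<lambda>i. Rk_const k (\<theta> (x i)) \<otimes>\<^bsub>Rk k\<^esub> Rk_of_fps k V [^]\<^bsub>Rk k\<^esub> i) {..<k}
          = Rk_of_fps k (\<Sum>i<k. fps_const (\<theta> (x i)) * V ^ i)"
    by (simp add: Rk_const_eq Rk_of_fps_pow Rk_of_fps_mult Rk_of_fps_finsum)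
  also have "\<dots> = Rk_subst k \<theta> V x"
    unfolding Rk_subst_def Rk_of_fps_eq_iff
  proof (intro allI impI)
    fix n assume "n < k"
    have "(\<Sum>i<k. fps_const (\<theta> (x i)) * V ^ i) $ n = (\<Sum>i<k. \<theta> (x i) * (V ^ i) $ n)"
      by (simp add: fps_sum_nth)
    also have "\<dots> = (\<Sum>i=0..n. \<theta> (x i) * (V ^ i) $ n)"
      using \<open>n < k\<close> startsby_zero_power_prefix[OF V0] by (intro sum.mono_neutral_right) auto
    also have "\<dots> = (Abs_fps (\<theta> \<circ> x) oo V) $ n"
      by (simp add: fps_compose_nth)
    finally show "(\<Sum>i<k. fps_const (\<theta> (x i)) * V ^ i) $ n = (Abs_fps (\<theta> \<circ> x) oo V) $ n" .
  qed
  finally show ?thesis .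
qed

lemma Rk_subst_id_X: "x \<in> carrier (Rk k) \<Longrightarrow> Rk_subst k id fps_X x = x"
  by (simp add: Rk_subst_def Rk_of_fps_Abs_fps)

lemma ring_hom_Fring_iff:
  "\<theta> \<in> ring_hom Fring Fring \<longleftrightarrow>
     (\<forall>a b. \<theta> (a * b) = \<theta> a * \<theta> b) \<and> (\<forall>a b. \<theta> (a + b) = \<theta> a + \<theta> b) \<and> \<theta> 1 = 1"
  by (auto simp: ring_hom_def Fring_def)

lemma ring_iso_Fring_iff: "\<theta> \<in> ring_iso Fring Fring \<longleftrightarrow> \<theta> \<in> ring_hom Fring Fring \<and> bij \<theta>"
  by (simp add: ring_iso_def Fring_def)

lemma Rk_subst_ring_hom:
  fixes \<theta> :: "'a::field \<Rightarrow> 'a"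
  assumes hom: "\<theta> \<in> ring_hom Fring Fring" and V0: "V $ 0 = 0"
  shows "Rk_subst k \<theta> V \<in> ring_hom (Rk k) (Rk k)"
proof -
  have mult: "\<theta> (a * b) = \<theta> a * \<theta> b" and add: "\<theta> (a + b) = \<theta> a + \<theta> b"
    and one: "\<theta> 1 = 1" for a b
    using hom by (simp_all add: ring_hom_Fring_iff)
  have zero: "\<theta> 0 = 0"
    using add[of 0 0] by (metis add.right_neutral add_left_cancel)
  have sum: "\<theta> (sum f A) = (\<Sum>i\<in>A. \<theta> (f i))" for f :: "nat \<Rightarrow> _" and A
    by (induction A rule: infinite_finite_induct) (simp_all add: zero add)
  show ?thesis
  proof (rule ring_hom_memI)
    fix x y :: "nat \<Rightarrow> 'a"
    have "Rk_of_fps k (Abs_fps (\<theta> \<circ> (x \<otimes>\<^bsub>Rk k\<^esub> y)))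
            = Rk_of_fps k (Abs_fps (\<theta> \<circ> x) * Abs_fps (\<theta> \<circ> y))"
      by (auto simp: Rk_def Rk_of_fps_def fun_eq_iff fps_mult_nth atLeast0AtMost sum mult zero)
    then show "Rk_subst k \<theta> V (x \<otimes>\<^bsub>Rk k\<^esub> y) = Rk_subst k \<theta> V x \<otimes>\<^bsub>Rk k\<^esub> Rk_subst k \<theta> V y"
      unfolding Rk_subst_def Rk_of_fps_mult
      by (simp add: Rk_of_fps_compose_cong fps_compose_mult_distrib[OF V0])
    have "Abs_fps (\<theta> \<circ> (x \<oplus>\<^bsub>Rk k\<^esub> y)) = Abs_fps (\<theta> \<circ> x) + Abs_fps (\<theta> \<circ> y)"
      by (simp add: Rk_def fps_eq_iff add)
    then show "Rk_subst k \<theta> V (x \<oplus>\<^bsub>Rk k\<^esub> y) = Rk_subst k \<theta> V x \<oplus>\<^bsub>Rk k\<^esub> Rk_subst k \<theta> V y"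
      by (simp add: Rk_subst_def Rk_of_fps_add fps_compose_add_distrib)
  next
    have "Rk_of_fps k (Abs_fps (\<theta> \<circ> \<one>\<^bsub>Rk k\<^esub>)) = Rk_of_fps k 1"
      by (auto simp: Rk_def Rk_of_fps_def fun_eq_iff zero one)
    then have "Rk_subst k \<theta> V \<one>\<^bsub>Rk k\<^esub> = Rk_of_fps k (1 oo V)"
      unfolding Rk_subst_def by (rule Rk_of_fps_compose_cong)
    then show "Rk_subst k \<theta> V \<one>\<^bsub>Rk k\<^esub> = \<one>\<^bsub>Rk k\<^esub>"
      by (simp add: Rk_one_eq)
  qed (simp add: Rk_subst_def)
qed

text \<open>The lowest nonzero coefficient of a difference survives composition with a series of
  subdegree one.\<close>
lemma Rk_subst_inj_on:
  assumes "inj \<theta>" and V0: "V $ 0 = 0" and V1: "V $ 1 \<noteq> 0"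
  shows "inj_on (Rk_subst k \<theta> V) (carrier (Rk k))"
proof (rule inj_onI, rule ccontr)
  fix x y assume x: "x \<in> carrier (Rk k)" and y: "y \<in> carrier (Rk k)"
    and eq: "Rk_subst k \<theta> V x = Rk_subst k \<theta> V y" and "x \<noteq> y"
  define D where "D = Abs_fps (\<theta> \<circ> x) - Abs_fps (\<theta> \<circ> y)"
  have D_nth: "D $ i \<noteq> 0 \<longleftrightarrow> x i \<noteq> y i" for i
    by (simp add: D_def inj_eq[OF \<open>inj \<theta>\<close>])
  obtain i where "x i \<noteq> y i"
    using \<open>x \<noteq> y\<close> by blast
  then have "D \<noteq> 0"
    using D_nth by (metis fps_zero_nth)
  define d where "d = subdegree D"
  have "x d \<noteq> y d"
    using D_nth[of d] nth_subdegree_nonzero[OF \<open>D \<noteq> 0\<close>] by (simp add: d_def)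
  have "d < k"
  proof (rule ccontr)
    assume "\<not> d < k"
    then have "x d = 0" "y d = 0"
      using x y by (simp_all add: carrier_Rk)
    with \<open>x d \<noteq> y d\<close> show False by simp
  qed
  have "subdegree V = 1"
    using V0 V1 by (intro subdegreeI) auto
  then have "subdegree (D oo V) = d"
    using V0 by (simp add: d_def)
  moreover have "D oo V \<noteq> 0"
    using \<open>D \<noteq> 0\<close> V0 V1 by (auto simp: fps_compose_eq_0_iff)
  ultimately have "(D oo V) $ d \<noteq> 0"
    using nth_subdegree_nonzero[of "D oo V"] by simp
  moreover have "(D oo V) $ d = 0"
    using eq \<open>d < k\<close> by (simp add: D_def fps_compose_sub_distrib Rk_subst_def Rk_of_fps_eq_iff)
  ultimately show False by contradiction
qed

lemma Rk_subst_ring_iso: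
  fixes \<theta> :: "'a::{finite,field} \<Rightarrow> 'a"
  assumes "\<theta> \<in> ring_iso Fring Fring" and "V $ 0 = 0" and "V $ 1 \<noteq> 0"
  shows "Rk_subst k \<theta> V \<in> ring_iso (Rk k) (Rk k)"
proof -
  have hom: "Rk_subst k \<theta> V \<in> ring_hom (Rk k) (Rk k)"
    using assms by (simp add: ring_iso_Fring_iff Rk_subst_ring_hom)
  moreover have "inj_on (Rk_subst k \<theta> V) (carrier (Rk k))"
    using assms by (simp add: ring_iso_Fring_iff bij_is_inj Rk_subst_inj_on)
  moreover have "Rk_subst k \<theta> V ` carrier (Rk k) \<subseteq> carrier (Rk k)"
    using ring_hom_closed[OF hom] by blast
  ultimately show ?thesis
    using endo_inj_surj[OF finite_carrier_Rk] by (simp add: ring_iso_def bij_betw_def)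
qed

lemma Rk_one_plus_const_u_pow:
  "\<one>\<^bsub>Rk k\<^esub> \<oplus>\<^bsub>Rk k\<^esub> Rk_const k c \<otimes>\<^bsub>Rk k\<^esub> Rk_u k [^]\<^bsub>Rk k\<^esub> (n::nat)
     = Rk_of_fps k (1 + fps_const c * fps_X ^ n)"
  by (simp add: Rk_one_eq Rk_const_eq Rk_u_eq Rk_of_fps_pow Rk_of_fps_mult Rk_of_fps_add)

lemma admissible_finprod_eq:
  assumes "admissible k \<theta> \<eta>"
  shows "\<exists>P. P $ 0 \<noteq> 0 \<and> finprod (Rk k) \<eta> {1..k-1} = Rk_of_fps k P"
proof -
  have "\<exists>g. g $ 0 \<noteq> 0 \<and> \<eta> j = Rk_of_fps k g" if "j \<in> {1..k-1}" for j
  proof (cases "j = 1")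
    case True
    obtain e where "e \<noteq> 0" "\<eta> 1 = Rk_of_fps k (fps_const e)"
      using assms by (auto simp: admissible_def Rk_const_eq)
    then show ?thesis
      using True by (intro exI[of _ "fps_const e"]) simp
  next
    case False
    with that have "2 \<le> j \<and> j \<le> k - 1"
      by auto
    then obtain c where "\<eta> j = \<one>\<^bsub>Rk k\<^esub> \<oplus>\<^bsub>Rk k\<^esub> Rk_const k c \<otimes>\<^bsub>Rk k\<^esub> Rk_u k [^]\<^bsub>Rk k\<^esub> (j - 1)"
      using assms unfolding admissible_def by blast
    then have "\<eta> j = Rk_of_fps k (1 + fps_const c * fps_X ^ (j - 1))"
      by (simp add: Rk_one_plus_const_u_pow)
    moreover have "(1 + fps_const c * fps_X ^ (j - 1)) $ 0 \<noteq> 0"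
      using False that by simp
    ultimately show ?thesis by blast
  qed
  then obtain g where g: "\<And>j. j \<in> {1..k-1} \<Longrightarrow> g j $ 0 \<noteq> 0 \<and> \<eta> j = Rk_of_fps k (g j)"
    by metis
  have "finprod (Rk k) \<eta> {1..k-1} = finprod (Rk k) (\<lambda>j. Rk_of_fps k (g j)) {1..k-1}"
    using g by (intro Rk.finprod_cong') auto
  also have "\<dots> = Rk_of_fps k (\<Prod>j\<in>{1..k-1}. g j)"
    by (rule Rk_of_fps_finprod)
  finally have "finprod (Rk k) \<eta> {1..k-1} = Rk_of_fps k (\<Prod>j\<in>{1..k-1}. g j)" .
  moreover have "(\<Prod>j\<in>A. g j) $ 0 = (\<Prod>j\<in>A. g j $ 0)" for A
    by (induction A rule: infinite_finite_induct) simp_all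
  ultimately show ?thesis
    using g by (intro exI[of _ "\<Prod>j\<in>{1..k-1}. g j"]) simp
qed

lemma Theta_eq_Rk_subst:
  assumes "finprod (Rk k) \<eta> {1..k-1} = Rk_of_fps k P"
  shows "Theta k \<theta> \<eta> x = Rk_subst k \<theta> (P * fps_X) x"
proof -
  have "Theta k \<theta> \<eta> x =
          finsum (Rk k) (\<lambda>i. Rk_const k (\<theta> (x i)) \<otimes>\<^bsub>Rk k\<^esub> Rk_of_fps k (P * fps_X) [^]\<^bsub>Rk k\<^esub> i) {..<k}"
    unfolding Theta_def Let_def assms
    by (simp add: Rk_const_eq Rk_u_eq Rk_of_fps_pow Rk_of_fps_mult power_mult_distrib mult.assoc)
  then show ?thesis
    by (simp add: finsum_Rk_powers_eq_Rk_subst)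
qed

lemma Theta_ring_iso:
  fixes \<theta> :: "'a::{finite,field} \<Rightarrow> 'a"
  assumes "admissible k \<theta> \<eta>"
  shows "Theta k \<theta> \<eta> \<in> ring_iso (Rk k) (Rk k)"
proof -
  obtain P where "P $ 0 \<noteq> 0" and P: "finprod (Rk k) \<eta> {1..k-1} = Rk_of_fps k P"
    using admissible_finprod_eq[OF assms] by blast
  have "Theta k \<theta> \<eta> = Rk_subst k \<theta> (P * fps_X)"
    by (rule ext) (rule Theta_eq_Rk_subst[OF P])
  moreover have "\<theta> \<in> ring_iso Fring Fring"
    using assms by (simp add: admissible_def)
  ultimately show ?thesis
    using \<open>P $ 0 \<noteq> 0\<close> by (simp add: Rk_subst_ring_iso)
qed

lemma Rk_pow_CHAR_power:
  fixes x :: "nat \<Rightarrow> 'a::field"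
  assumes "Factorial_Ring.prime CHAR('a)" and x: "x \<in> carrier (Rk k)" and "k \<le> CHAR('a) ^ n"
  shows "x [^]\<^bsub>Rk k\<^esub> (CHAR('a) ^ n) = Rk_const k (x 0 ^ CHAR('a) ^ n)"
proof -
  define q where "q = CHAR('a) ^ n"
  define N where "N = Abs_fps x - fps_const (x 0)"
  have "Abs_fps x ^ q = (fps_const (x 0) + N) ^ q"
    by (simp add: N_def)
  also have "\<dots> = fps_const (x 0 ^ q) + N ^ q"
    using assms(1) by (simp add: freshmans_dream' q_def fps_const_power)
  finally have "Abs_fps x ^ q = fps_const (x 0 ^ q) + N ^ q" .
  moreover have "(N ^ q) $ i = 0" if "i < k" for i
    using startsby_zero_power_prefix[of N q] that assms(3) by (simp add: N_def q_def)
  ultimately have "Rk_of_fps k (Abs_fps x ^ q) = Rk_const k (x 0 ^ q)"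
    by (simp add: Rk_const_eq Rk_of_fps_eq_iff)
  then show ?thesis
    using Rk_of_fps_Abs_fps[OF x] by (metis Rk_of_fps_pow q_def)
qed

lemma prime_CHAR_finite_field: "Factorial_Ring.prime CHAR('a::{finite,field})"
  by (rule prime_CHAR_semidom) (simp add: finite_imp_CHAR_pos)

lemma surj_power_CHAR_power: "surj (\<lambda>d::'a::{finite,field}. d ^ (CHAR('a) ^ n))"
proof (rule finite_UNIV_inj_surj[OF finite_UNIV], rule injI)
  fix d e :: 'a
  assume eq: "d ^ CHAR('a) ^ n = e ^ CHAR('a) ^ n"
  have "(d - e) ^ CHAR('a) ^ n + e ^ CHAR('a) ^ n = d ^ CHAR('a) ^ n"
    using freshmans_dream'[OF prime_CHAR_finite_field refl, of "d - e" e n] by simp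
  then have "(d - e) ^ CHAR('a) ^ n = 0"
    using eq by simp
  then show "d = e"
    by simp
qed

text \<open>Every constant is a CHAR^k-th power, and every CHAR^k-th power in R_k is a constant
  because the Frobenius kills the nilpotent part.\<close>
lemma Rk_hom_const:
  fixes \<sigma> :: "(nat \<Rightarrow> 'a::{finite,field}) \<Rightarrow> (nat \<Rightarrow> 'a)"
  assumes "\<sigma> \<in> ring_hom (Rk k) (Rk k)"
  shows "\<exists>e. \<sigma> (Rk_const k c) = Rk_const k e"
proof -
  interpret ring_hom_cring "Rk k" "Rk k" \<sigma>
    by (rule ring_hom_cring_Rk[OF assms])
  define q where "q = CHAR('a) ^ k"
  have "k < 2 ^ k"
    by (rule less_exp)
  also have "2 ^ k \<le> q"
    unfolding q_def by (intro power_mono prime_ge_2_nat prime_CHAR_finite_field) simp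
  finally have "k \<le> q" by simp
  obtain d where "c = d ^ q"
    using surj_power_CHAR_power[of k] by (metis q_def surjD)
  then have "Rk_const k c = Rk_const k d [^]\<^bsub>Rk k\<^esub> q"
    by (simp add: Rk_const_eq Rk_of_fps_pow fps_const_power)
  then have "\<sigma> (Rk_const k c) = \<sigma> (Rk_const k d) [^]\<^bsub>Rk k\<^esub> q"
    by (simp add: Rk_const_eq)
  also have "\<dots> = Rk_const k (\<sigma> (Rk_const k d) 0 ^ q)"
    unfolding q_def
    by (rule Rk_pow_CHAR_power[OF prime_CHAR_finite_field])
      (simp_all add: \<open>k \<le> q\<close>[unfolded q_def])
  finally show ?thesis ..
qed

lemma Rk_const_inj: "0 < k \<Longrightarrow> inj (Rk_const k)"
  by (rule injI) (drule fun_cong[of _ _ 0], simp add: Rk_const_def)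

lemma ring_iso_Fring_of_Rk:
  fixes \<theta> :: "'a::{finite,field} \<Rightarrow> 'a"
  assumes \<sigma>: "\<sigma> \<in> ring_iso (Rk k) (Rk k)" and "0 < k"
    and \<sigma>_const: "\<And>c. \<sigma> (Rk_const k c) = Rk_const k (\<theta> c)"
  shows "\<theta> \<in> ring_iso Fring Fring"
proof -
  have const_mult: "Rk_const k (a * b) = Rk_const k a \<otimes>\<^bsub>Rk k\<^esub> Rk_const k b"
    and const_add: "Rk_const k (a + b) = Rk_const k a \<oplus>\<^bsub>Rk k\<^esub> Rk_const k b" for a b :: 'a
    by (simp_all add: Rk_const_eq Rk_of_fps_mult Rk_of_fps_add fps_const_mult fps_const_add)
  have const_one: "Rk_const k 1 = \<one>\<^bsub>Rk k\<^esub>"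
    by (simp add: Rk_const_eq Rk_one_eq)
  note inj_const = injD[OF Rk_const_inj[OF \<open>0 < k\<close>]]
  have "\<theta> (a * b) = \<theta> a * \<theta> b" for a b
    using ring_iso_memE(2)[OF \<sigma> Rk_const_carrier Rk_const_carrier]
    by (intro inj_const) (simp add: const_mult flip: \<sigma>_const)
  moreover have "\<theta> (a + b) = \<theta> a + \<theta> b" for a b
    using ring_iso_memE(3)[OF \<sigma> Rk_const_carrier Rk_const_carrier]
    by (intro inj_const) (simp add: const_add flip: \<sigma>_const)
  moreover have "\<theta> 1 = 1"
    using ring_iso_memE(4)[OF \<sigma>] by (intro inj_const) (simp add: const_one flip: \<sigma>_const)
  moreover have "inj \<theta>"
  proof (rule injI)
    fix a b assume "\<theta> a = \<theta> b"
    then have "\<sigma> (Rk_const k a) = \<sigma> (Rk_const k b)"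
      by (simp add: \<sigma>_const)
    then show "a = b"
      using bij_betw_imp_inj_on[OF ring_iso_memE(5)[OF \<sigma>]]
      by (intro inj_const) (meson Rk_const_carrier inj_onD)
  qed
  ultimately show ?thesis
    by (simp add: ring_iso_Fring_iff ring_hom_Fring_iff finite_UNIV_inj_surj bij_def)
qed

lemma Rk_hom_eq_Rk_subst:
  assumes \<sigma>: "\<sigma> \<in> ring_hom (Rk k) (Rk k)"
    and \<sigma>_const: "\<And>c. \<sigma> (Rk_const k c) = Rk_const k (\<theta> c)"
    and \<sigma>_u: "\<sigma> (Rk_u k) = Rk_of_fps k V" and V0: "V $ 0 = 0"
    and x: "x \<in> carrier (Rk k)"
  shows "\<sigma> x = Rk_subst k \<theta> V x"
proof -
  interpret ring_hom_cring "Rk k" "Rk k" \<sigma>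
    by (rule ring_hom_cring_Rk[OF \<sigma>])
  have x_eq: "finsum (Rk k) (\<lambda>i. Rk_const k (x i) \<otimes>\<^bsub>Rk k\<^esub> Rk_u k [^]\<^bsub>Rk k\<^esub> i) {..<k} = x"
    using finsum_Rk_powers_eq_Rk_subst[of fps_X k id x] Rk_subst_id_X[OF x] by (simp add: Rk_u_eq)
  have "\<sigma> x = \<sigma> (finsum (Rk k) (\<lambda>i. Rk_const k (x i) \<otimes>\<^bsub>Rk k\<^esub> Rk_u k [^]\<^bsub>Rk k\<^esub> i) {..<k})"
    by (simp only: x_eq)
  also have "\<dots> = finsum (Rk k) (\<lambda>i. \<sigma> (Rk_const k (x i) \<otimes>\<^bsub>Rk k\<^esub> Rk_u k [^]\<^bsub>Rk k\<^esub> i)) {..<k}"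
    by (subst hom_finsum) (auto simp: o_def)
  also have "\<dots> = finsum (Rk k) (\<lambda>i. Rk_const k (\<theta> (x i)) \<otimes>\<^bsub>Rk k\<^esub> Rk_of_fps k V [^]\<^bsub>Rk k\<^esub> i) {..<k}"
  proof (rule Rk.finsum_cong')
    fix i
    show "\<sigma> (Rk_const k (x i) \<otimes>\<^bsub>Rk k\<^esub> Rk_u k [^]\<^bsub>Rk k\<^esub> i)
            = Rk_const k (\<theta> (x i)) \<otimes>\<^bsub>Rk k\<^esub> Rk_of_fps k V [^]\<^bsub>Rk k\<^esub> i"
      using hom_mult[OF Rk_const_carrier Rk.nat_pow_closed[OF Rk_u_carrier]] hom_pow[OF Rk_u_carrier]
      by (simp add: \<sigma>_const \<sigma>_u)
  qed (simp_all add: Pi_def)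
  also have "\<dots> = Rk_subst k \<theta> V x"
    by (rule finsum_Rk_powers_eq_Rk_subst[OF V0])
  finally show ?thesis .
qed

lemma Rk_nilpotent_coeff_0:
  assumes x: "x \<in> carrier (Rk k)" and "x [^]\<^bsub>Rk k\<^esub> (n::nat) = \<zero>\<^bsub>Rk k\<^esub>" and "0 < k"
  shows "x 0 = 0"
proof -
  have "Rk_of_fps k (Abs_fps x ^ n) = Rk_of_fps k 0"
    using assms(2) by (simp add: Rk_zero_eq Rk_of_fps_Abs_fps[OF x] flip: Rk_of_fps_pow)
  then have "(Abs_fps x ^ n) $ 0 = 0"
    using \<open>0 < k\<close> by (simp add: Rk_of_fps_eq_iff)
  then show "x 0 = 0"
    by (simp add: fps_power_zeroth)
qed

lemma Rk_iso_u_coeff_1: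
  fixes \<sigma> :: "(nat \<Rightarrow> 'a::field) \<Rightarrow> (nat \<Rightarrow> 'a)"
  assumes \<sigma>: "\<sigma> \<in> ring_iso (Rk k) (Rk k)" and "2 \<le> k"
    and \<sigma>_const: "\<And>c. \<sigma> (Rk_const k c) = Rk_const k (\<theta> c)"
    and v0: "\<sigma> (Rk_u k) 0 = 0"
  shows "\<sigma> (Rk_u k) 1 \<noteq> 0"
proof
  define V where "V = Abs_fps (\<sigma> (Rk_u k))"
  have hom: "\<sigma> \<in> ring_hom (Rk k) (Rk k)"
    using \<sigma> by (simp add: ring_iso_def)
  have \<sigma>_u: "\<sigma> (Rk_u k) = Rk_of_fps k V"
    unfolding V_def by (rule Rk_of_fps_Abs_fps[symmetric]) (rule ring_hom_closed[OF hom Rk_u_carrier])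
  assume "\<sigma> (Rk_u k) 1 = 0"
  have "Rk_u k \<in> \<sigma> ` carrier (Rk k)"
    using ring_iso_memE(5)[OF \<sigma>] by (simp add: bij_betw_def)
  then obtain y where uy: "Rk_u k = \<sigma> y" and y: "y \<in> carrier (Rk k)"
    by (rule imageE)
  have "Rk_u k = Rk_subst k \<theta> V y"
    unfolding uy by (rule Rk_hom_eq_Rk_subst[OF hom \<sigma>_const \<sigma>_u _ y]) (simp add: V_def v0)
  then have "Rk_u k 1 = (Abs_fps (\<theta> \<circ> y) oo V) $ 1"
    using \<open>2 \<le> k\<close> by (simp add: Rk_subst_def Rk_of_fps_def)
  also have "\<dots> = 0"
    using v0 \<open>\<sigma> (Rk_u k) 1 = 0\<close> by (simp add: V_def fps_compose_nth numeral_2_eq_2)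
  finally show False
    using \<open>2 \<le> k\<close> by (simp add: Rk_u_def)
qed

lemma Rk_iso_u_image:
  fixes \<sigma> :: "(nat \<Rightarrow> 'a::field) \<Rightarrow> (nat \<Rightarrow> 'a)"
  assumes \<sigma>: "\<sigma> \<in> ring_iso (Rk k) (Rk k)" and "0 < k"
    and \<sigma>_const: "\<And>c. \<sigma> (Rk_const k c) = Rk_const k (\<theta> c)"
  shows "\<exists>W. W $ 0 \<noteq> 0 \<and> \<sigma> (Rk_u k) = Rk_of_fps k (W * fps_X)"
proof -
  have hom: "\<sigma> \<in> ring_hom (Rk k) (Rk k)"
    using \<sigma> by (simp add: ring_iso_def)
  interpret ring_hom_cring "Rk k" "Rk k" \<sigma>
    by (rule ring_hom_cring_Rk[OF hom])
  define v where "v = \<sigma> (Rk_u k)"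
  have v: "v \<in> carrier (Rk k)"
    unfolding v_def by simp
  have "Rk_u k [^]\<^bsub>Rk k\<^esub> k = (\<zero>\<^bsub>Rk k\<^esub> :: nat \<Rightarrow> 'a)"
    by (simp add: Rk_u_eq Rk_zero_eq Rk_of_fps_pow Rk_of_fps_eq_iff)
  then have "v [^]\<^bsub>Rk k\<^esub> k = \<zero>\<^bsub>Rk k\<^esub>"
    using hom_pow[OF Rk_u_carrier, of k] hom_zero by (simp add: v_def)
  then have v0: "v 0 = 0"
    using Rk_nilpotent_coeff_0[OF v _ \<open>0 < k\<close>] by blast
  define W where "W = (if 2 \<le> k then Abs_fps (\<lambda>j. v (Suc j)) else 1)"
  have "W $ 0 \<noteq> 0"
    using Rk_iso_u_coeff_1[OF \<sigma> _ \<sigma>_const] v0 by (simp add: W_def v_def)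
  moreover have "v = Rk_of_fps k (W * fps_X)"
  proof -
    have "Abs_fps v $ i = (W * fps_X) $ i" if "i < k" for i
      using that v0 by (cases i) (auto simp: W_def)
    then show ?thesis
      using Rk_of_fps_Abs_fps[OF v] by (metis Rk_of_fps_eq_iff)
  qed
  ultimately show ?thesis
    by (auto simp: v_def)
qed

lemma fps_agreement_extend_by_factor:
  fixes Q W :: "'a::field fps"
  assumes QW: "\<forall>j<n. Q $ j = W $ j" and "0 < n" and W0: "W $ 0 \<noteq> 0"
  shows "\<exists>c. \<forall>j<Suc n. (Q * (1 + fps_const c * fps_X ^ n)) $ j = W $ j"
proof (intro exI allI impI)
  define c where "c = (W $ n - Q $ n) / Q $ 0"
  fix j assume "j < Suc n"
  have "(Q * (1 + fps_const c * fps_X ^ n)) $ j = Q $ j + c * (if j < n then 0 else Q $ (j - n))"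
    by (simp add: distrib_left fps_X_power_mult_right_nth mult.left_commute[of Q])
  also have "\<dots> = W $ j"
  proof (cases "j < n")
    case True
    then show ?thesis
      using QW by simp
  next
    case False
    then have "j = n"
      using \<open>j < Suc n\<close> by simp
    moreover have "Q $ 0 = W $ 0"
      using QW \<open>0 < n\<close> by simp
    ultimately show ?thesis
      using W0 by (simp add: c_def)
  qed
  finally show "(Q * (1 + fps_const c * fps_X ^ n)) $ j = W $ j" .
qed

lemma fps_unit_factorization:
  fixes W :: "'a::field fps"
  assumes W0: "W $ 0 \<noteq> 0"
  shows "\<exists>g. (\<exists>e. e \<noteq> 0 \<and> g 1 = fps_const e) \<and>
     (\<forall>i. 2 \<le> i \<and> i \<le> n \<longrightarrow> (\<exists>c. g i = 1 + fps_const c * fps_X ^ (i - 1))) \<and>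
     (\<forall>j<n. (\<Prod>i\<in>{1..n}. g i) $ j = W $ j)"
proof (induction n)
  case 0
  show ?case
    by (intro exI[of _ "\<lambda>_. fps_const 1"]) auto
next
  case (Suc n)
  then obtain g where g1: "\<exists>e. e \<noteq> 0 \<and> g 1 = fps_const e"
    and gi: "\<forall>i. 2 \<le> i \<and> i \<le> n \<longrightarrow> (\<exists>c. g i = 1 + fps_const c * fps_X ^ (i - 1))"
    and gW: "\<forall>j<n. (\<Prod>i\<in>{1..n}. g i) $ j = W $ j"
    by blast
  show ?case
  proof (cases "n = 0")
    case True
    show ?thesis
      by (intro exI[of _ "g(1 := fps_const (W $ 0))"]) (use True W0 in auto)
  next
    case False
    then obtain c where c: "\<forall>j<Suc n. ((\<Prod>i\<in>{1..n}. g i) * (1 + fps_const c * fps_X ^ n)) $ j = W $ j"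
      using fps_agreement_extend_by_factor[OF gW _ W0] by blast
    define g' where "g' = g(Suc n := 1 + fps_const c * fps_X ^ n)"
    have "(\<Prod>i\<in>{1..Suc n}. g' i) = (\<Prod>i\<in>{1..n}. g' i) * g' (Suc n)"
      by (simp add: atLeastAtMostSuc_conv mult.commute)
    also have "(\<Prod>i\<in>{1..n}. g' i) = (\<Prod>i\<in>{1..n}. g i)"
      unfolding g'_def by (intro prod.cong) auto
    also have "g' (Suc n) = 1 + fps_const c * fps_X ^ n"
      by (simp add: g'_def)
    finally have "\<forall>j<Suc n. (\<Prod>i\<in>{1..Suc n}. g' i) $ j = W $ j"
      using c by simp
    moreover have "\<exists>e. e \<noteq> 0 \<and> g' 1 = fps_const e"
      using g1 False by (simp add: g'_def)
    moreover have "\<exists>c. g' i = 1 + fps_const c * fps_X ^ (i - 1)" if "2 \<le> i" "i \<le> Suc n" for i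
      using gi that by (cases "i = Suc n") (auto simp: g'_def)
    ultimately show ?thesis
      by blast
  qed
qed

lemma admissible_factorization:
  assumes "\<theta> \<in> ring_iso Fring Fring" and "W $ 0 \<noteq> 0"
  shows "\<exists>\<eta> P. admissible k \<theta> \<eta> \<and> finprod (Rk k) \<eta> {1..k-1} = Rk_of_fps k P \<and>
           Rk_of_fps k (P * fps_X) = Rk_of_fps k (W * fps_X)"
proof -
  obtain g where g1: "\<exists>e. e \<noteq> 0 \<and> g 1 = fps_const e"
    and gi: "\<forall>i. 2 \<le> i \<and> i \<le> k - 1 \<longrightarrow> (\<exists>c. g i = 1 + fps_const c * fps_X ^ (i - 1))"
    and gW: "\<forall>j<k - 1. (\<Prod>i\<in>{1..k - 1}. g i) $ j = W $ j"
    using fps_unit_factorization[OF assms(2), of "k - 1"] by blast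
  define \<eta> where "\<eta> = (\<lambda>i. Rk_of_fps k (g i))"
  have "\<exists>e. e \<noteq> 0 \<and> \<eta> 1 = Rk_const k e"
    using g1 by (auto simp: \<eta>_def Rk_const_eq)
  moreover have "\<forall>i. 2 \<le> i \<and> i \<le> k - 1 \<longrightarrow>
      (\<exists>c. \<eta> i = \<one>\<^bsub>Rk k\<^esub> \<oplus>\<^bsub>Rk k\<^esub> Rk_const k c \<otimes>\<^bsub>Rk k\<^esub> Rk_u k [^]\<^bsub>Rk k\<^esub> (i - 1))"
  proof (intro allI impI)
    fix i assume "2 \<le> i \<and> i \<le> k - 1"
    then obtain c where "g i = 1 + fps_const c * fps_X ^ (i - 1)"
      using gi by blast
    then show "\<exists>c. \<eta> i = \<one>\<^bsub>Rk k\<^esub> \<oplus>\<^bsub>Rk k\<^esub> Rk_const k c \<otimes>\<^bsub>Rk k\<^esub> Rk_u k [^]\<^bsub>Rk k\<^esub> (i - 1)"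
      by (auto simp: \<eta>_def Rk_one_plus_const_u_pow)
  qed
  ultimately have "admissible k \<theta> \<eta>"
    using assms(1) unfolding admissible_def by blast
  moreover have "finprod (Rk k) \<eta> {1..k-1} = Rk_of_fps k (\<Prod>i\<in>{1..k - 1}. g i)"
    by (simp add: \<eta>_def Rk_of_fps_finprod)
  moreover have "Rk_of_fps k ((\<Prod>i\<in>{1..k - 1}. g i) * fps_X) = Rk_of_fps k (W * fps_X)"
    using gW by (auto simp: Rk_of_fps_eq_iff mult.commute[of _ fps_X])
  ultimately show ?thesis
    by blast
qed

lemma Rk_ring_iso_eq_Theta:
  fixes \<sigma> :: "(nat \<Rightarrow> 'a::{finite,field}) \<Rightarrow> (nat \<Rightarrow> 'a)"
  assumes \<sigma>: "\<sigma> \<in> ring_iso (Rk k) (Rk k)" and "0 < k"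
  shows "\<exists>\<theta> \<eta>. admissible k \<theta> \<eta> \<and> (\<forall>x \<in> carrier (Rk k). \<sigma> x = Theta k \<theta> \<eta> x)"
proof -
  have hom: "\<sigma> \<in> ring_hom (Rk k) (Rk k)"
    using \<sigma> by (simp add: ring_iso_def)
  define \<theta> where "\<theta> c = \<sigma> (Rk_const k c) 0" for c
  have \<sigma>_const: "\<sigma> (Rk_const k c) = Rk_const k (\<theta> c)" for c
    using Rk_hom_const[OF hom, of c] \<open>0 < k\<close> by (auto simp: \<theta>_def Rk_const_def)
  have \<theta>: "\<theta> \<in> ring_iso Fring Fring"
    by (rule ring_iso_Fring_of_Rk[OF \<sigma> \<open>0 < k\<close> \<sigma>_const])
  obtain W where "W $ 0 \<noteq> 0" and \<sigma>_u: "\<sigma> (Rk_u k) = Rk_of_fps k (W * fps_X)"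
    using Rk_iso_u_image[OF \<sigma> \<open>0 < k\<close> \<sigma>_const] by blast
  obtain \<eta> P where "admissible k \<theta> \<eta>" and P: "finprod (Rk k) \<eta> {1..k-1} = Rk_of_fps k P"
    and PW: "Rk_of_fps k (P * fps_X) = Rk_of_fps k (W * fps_X)"
    using admissible_factorization[OF \<theta> \<open>W $ 0 \<noteq> 0\<close>] by blast
  have "\<sigma> x = Theta k \<theta> \<eta> x" if "x \<in> carrier (Rk k)" for x
    using Rk_hom_eq_Rk_subst[OF hom \<sigma>_const \<sigma>_u[folded PW] _ that] Theta_eq_Rk_subst[OF P] by simp
  then show ?thesis
    using \<open>admissible k \<theta> \<eta>\<close> by blast
qed

theorem lemma3p1:
  fixes p m k :: nat
  assumes "Factorial_Ring.prime p" and "m \<ge> 1" and "k \<ge> 1"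
    and "card (UNIV :: 'a set) = p ^ m"
  shows "(\<forall>\<theta> \<eta>. admissible k (\<theta> :: 'a::{finite,field} \<Rightarrow> 'a) \<eta> \<longrightarrow>
             Theta k \<theta> \<eta> \<in> ring_iso (Rk k) (Rk k))
       \<and> (\<forall>\<sigma>. \<sigma> \<in> ring_iso (Rk k :: (nat \<Rightarrow> 'a) ring) (Rk k) \<longleftrightarrow>
             (\<exists>\<theta> \<eta>. admissible k \<theta> \<eta> \<and>
                 (\<forall>x \<in> carrier (Rk k). \<sigma> x = Theta k \<theta> \<eta> x)))"
proof (intro conjI allI impI iffI)
  fix \<theta> :: "'a \<Rightarrow> 'a" and \<eta>
  assume "admissible k \<theta> \<eta>"
  then show "Theta k \<theta> \<eta> \<in> ring_iso (Rk k) (Rk k)"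
    by (rule Theta_ring_iso)
next
  fix \<sigma> :: "(nat \<Rightarrow> 'a) \<Rightarrow> (nat \<Rightarrow> 'a)"
  assume "\<sigma> \<in> ring_iso (Rk k) (Rk k)"
  then show "\<exists>\<theta> \<eta>. admissible k \<theta> \<eta> \<and> (\<forall>x \<in> carrier (Rk k). \<sigma> x = Theta k \<theta> \<eta> x)"
    by (rule Rk_ring_iso_eq_Theta) (use \<open>k \<ge> 1\<close> in simp)
next
  fix \<sigma> :: "(nat \<Rightarrow> 'a) \<Rightarrow> (nat \<Rightarrow> 'a)"
  assume "\<exists>\<theta> \<eta>. admissible k \<theta> \<eta> \<and> (\<forall>x \<in> carrier (Rk k). \<sigma> x = Theta k \<theta> \<eta> x)"
  then show "\<sigma> \<in> ring_iso (Rk k) (Rk k)"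
    by (metis Rk.ring_iso_restrict Theta_ring_iso)
qed

end
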